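(* Assume $e_{-1}+e_{+1}<1$ and $\delta_{\tilde p}\neq 0$, and let $$\alpha=1-(1-e_{-1}-e_{+1})\cdot\frac{\delta_p}{\delta_{\tilde p}}.$$ Let $\mathcal F$ be a class of measurable classifiers $f:\mathcal X\to\{-1,+1\}$ and let $\tilde f^*\in\arg\min_{f\in\mathcal F}\mathbb E_{\tilde{\mathcal D}}[\mathbb 1_{\alpha\text{-peer}}(f(X),\tilde Y)]$. Then $\tilde f^*\in\arg\min_{f\in\mathcal F}R_{\mathcal D}(f)$, where $R_{\mathcal D}(f)=\mathbb P_{(X,Y)\sim\mathcal D}(f(X)\neq Y)$.
   Context: Let $\mathcal X\subseteq\mathbb R^d$ and let $(X,Y)$ be a random pair with distribution $\mathcal D$ on $\mathcal X\times\{-1,+1\}$, with $p:=\mathbb P(Y=+1)\in(0,1)$. A noisy label $\tilde Y\in\{-1,+1\}$ is generated with noise rates $e_{+1}:=\mathbb P(\tilde Y=-1\mid Y=+1)$, $e_{-1}:=\mathbb P(\tilde Y=+1\mid Y=-1)$, where $\tilde Y$ is conditionally independent of $X$ given $Y$; $\tilde{\mathcal D}$ is the distribution of $(X,\tilde Y)$. Let $\delta_p:=\mathbb P(Y=+1)-\mathbb P(Y=-1)$ and $\delta_{\tilde p}:=\mathbb P(\tilde Y=+1)-\mathbb P(\tilde Y=-1)$. The 0-1 loss is $\mathbb 1(a,b)=1$ if $a\neq b$ and $0$ otherwise. For a weight $\alpha$, the expected $\alpha$-weighted 0-1 peer loss is $$\mathbb E_{\tilde{\mathcal D}}[\mathbb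 1_{\alpha\text{-peer}}(f(X),\tilde Y)]:=\mathbb E[\mathbb 1(f(X),\tilde Y)]-\alpha\,\mathbb E[\mathbb 1(f(X_1),\tilde Y_2)],$$ where $(X,\tilde Y),(X_1,\tilde Y_1),(X_2,\tilde Y_2)$ are i.i.d. draws from $\tilde{\mathcal D}$. *)

theory Defs
  imports "HOL-Probability.Probability"
begin

text \<open>Labels are integers in {-1,+1}. The whole experiment (X, Y, noisy label Yt)
lives on one probability space M.\<close>

definition pY :: "'w measure \<Rightarrow> ('w \<Rightarrow> int) \<Rightarrow> int \<Rightarrow> real" where
  "pY M Y y = measure M {\<omega> \<in> space M. Y \<omega> = y}"

definition noise_rate :: "'w measure \<Rightarrow> ('w \<Rightarrow> int) \<Rightarrow> ('w \<Rightarrow> int) \<Rightarrow> int \<Rightarrow> real" where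
  "noise_rate M Y Yt y =
     measure M {\<omega> \<in> space M. Y \<omega> = y \<and> Yt \<omega> = - y} / pY M Y y"

definition delta :: "'w measure \<Rightarrow> ('w \<Rightarrow> int) \<Rightarrow> real" where
  "delta M Y = pY M Y 1 - pY M Y (-1)"

definition noisy_dist :: "'w measure \<Rightarrow> ('w \<Rightarrow> 'x::topological_space) \<Rightarrow> ('w \<Rightarrow> int)
    \<Rightarrow> ('x \<times> int) measure" where
  "noisy_dist M X Yt = distr M (borel \<Otimes>\<^sub>M count_space UNIV) (\<lambda>\<omega>. (X \<omega>, Yt \<omega>))"

text \<open>Expected alpha-weighted 0-1 peer loss: E[1(f X, Yt)] - alpha * E[1(f X1, Yt2)],
  with (X1,Yt1),(X2,Yt2) i.i.d. from the noisy distribution (product measure).\<close>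
definition peer_loss :: "'w measure \<Rightarrow> ('w \<Rightarrow> 'x::topological_space) \<Rightarrow> ('w \<Rightarrow> int)
    \<Rightarrow> real \<Rightarrow> ('x \<Rightarrow> int) \<Rightarrow> real" where
  "peer_loss M X Yt \<alpha> f =
     (LINT z | noisy_dist M X Yt. (if f (fst z) \<noteq> snd z then 1 else 0))
     - \<alpha> * (LINT zz | (noisy_dist M X Yt \<Otimes>\<^sub>M noisy_dist M X Yt).
                 (if f (fst (fst zz)) \<noteq> snd (snd zz) then 1 else 0))"

definition risk :: "'w measure \<Rightarrow> ('w \<Rightarrow> 'x) \<Rightarrow> ('w \<Rightarrow> int) \<Rightarrow> ('x \<Rightarrow> int) \<Rightarrow> real" where
  "risk M X Y f = measure M {\<omega> \<in> space M. f (X \<omega>) \<noteq> Y \<omega>}"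

end

(* Under class-conditional noise the expected alpha-peer loss of every classifier f is an
   affine function of its clean risk,
     peer_loss f = e_{-1} - alpha P(Yt = 1) + (1 - e_{-1} - e_{+1}) R(f).
   Conditional independence of Yt and X given Y writes P(f X ~= Yt) in terms of the joint
   probabilities P(f X = a, Y = y) and the noise rates; the peer term involves two independent
   draws, so it equals P(f X = 1) P(Yt = -1) + P(f X = -1) P(Yt = 1). The prescribed alpha is
   exactly the weight at which the coefficients of P(f X = 1, Y = 1) and P(f X = 1, Y = -1)
   become -(1 - e_{-1} - e_{+1}) and +(1 - e_{-1} - e_{+1}), so only the risk survives. As this
   slope is positive, peer-loss minimizers are risk minimizers. *)

theory Submission
  imports Defs
begin

context prob_space
begin

lemma prob_split_sign:
  assumes "Measurable.pred M P" and "g \<in> measurable M (count_space UNIV)"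
    and "\<forall>\<omega>\<in>space M. g \<omega> \<in> {-1, 1::int}"
  shows "prob {\<omega>\<in>space M. P \<omega>}
    = prob {\<omega>\<in>space M. P \<omega> \<and> g \<omega> = 1} + prob {\<omega>\<in>space M. P \<omega> \<and> g \<omega> = -1}"
proof -
  have "{\<omega>\<in>space M. P \<omega>} = {\<omega>\<in>space M. P \<omega> \<and> g \<omega> = 1} \<union> {\<omega>\<in>space M. P \<omega> \<and> g \<omega> = -1}"
    using assms(3) by force
  moreover have "{\<omega>\<in>space M. P \<omega> \<and> g \<omega> = 1} \<inter> {\<omega>\<in>space M. P \<omega> \<and> g \<omega> = -1} = {}"
    by auto
  ultimately show ?thesis
    using assms(1,2) by (simp add: finite_measure_Union)
qed

lemma prob_sign_neg:
  assumes "g \<in> measurable M (count_space UNIV)" and "\<forall>\<omega>\<in>space M. g \<omega> \<in> {-1, 1::int}"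
  shows "prob {\<omega>\<in>space M. g \<omega> = -1} = 1 - prob {\<omega>\<in>space M. g \<omega> = 1}"
  using prob_split_sign[of "\<lambda>_. True", OF _ assms] by (simp add: prob_space)

lemma integral_if_eq_prob:
  assumes "Measurable.pred M P"
  shows "(LINT \<omega>|M. (if P \<omega> then 1 else 0)) = prob {\<omega>\<in>space M. P \<omega>}"
proof -
  have "(LINT \<omega>|M. (if P \<omega> then 1 else 0)) = (LINT \<omega>|M. indicator {\<omega>\<in>space M. P \<omega>} \<omega>)"
    by (rule Bochner_Integration.integral_cong) (auto simp: indicator_def)
  also have "\<dots> = prob {\<omega>\<in>space M. P \<omega>}"
    by (simp add: Int_absorb2)
  finally show ?thesis .
qed

lemma integral_comp_sign:
  fixes h :: "int \<Rightarrow> real"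
  assumes "g \<in> measurable M (count_space UNIV)" and "\<forall>\<omega>\<in>space M. g \<omega> \<in> {-1, 1::int}"
  shows "(LINT \<omega>|M. h (g \<omega>))
    = prob {\<omega>\<in>space M. g \<omega> = 1} * h 1 + prob {\<omega>\<in>space M. g \<omega> = -1} * h (-1)"
proof -
  have "(LINT \<omega>|M. h (g \<omega>))
      = (LINT \<omega>|M. (if g \<omega> = 1 then 1 else 0) * h 1 + (if g \<omega> = -1 then 1 else 0) * h (-1))"
    using assms(2) by (intro Bochner_Integration.integral_cong) auto
  also have "\<dots> = (LINT \<omega>|M. (if g \<omega> = 1 then 1 else 0)) * h 1
      + (LINT \<omega>|M. (if g \<omega> = -1 then 1 else 0)) * h (-1)"
    using assms(1) by (simp add: integrable_const_bound[where B=1])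
  finally show ?thesis
    using assms(1) by (simp add: integral_if_eq_prob)
qed

end

lemma borel_measurable_int_count_space:
  fixes f :: "'a \<Rightarrow> int"
  shows "f \<in> borel_measurable N \<Longrightarrow> f \<in> measurable N (count_space UNIV)"
  by (simp add: measurable_cong_sets[OF refl sets_borel_eq_count_space])

lemma peer_loss_risk_identity:
  fixes p e_pos e_neg r_pos r_neg \<alpha> :: real
  defines "p_noisy \<equiv> p * (1 - e_pos) + (1 - p) * e_neg"
  assumes "p_noisy - (1 - p_noisy) \<noteq> 0"
    and "\<alpha> = 1 - (1 - e_neg - e_pos) * (p - (1 - p)) / (p_noisy - (1 - p_noisy))"
  shows "r_pos * e_pos + (p - r_pos) * (1 - e_pos) + ((1 - p) - r_neg) * e_neg + r_neg * (1 - e_neg)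
      - \<alpha> * ((r_pos + r_neg) * (1 - p_noisy) + (1 - (r_pos + r_neg)) * p_noisy)
    = e_neg - \<alpha> * p_noisy + (1 - e_neg - e_pos) * (r_neg + (p - r_pos))"
proof -
  have "\<alpha> * (p_noisy - (1 - p_noisy)) = (p_noisy - (1 - p_noisy)) - (1 - e_neg - e_pos) * (p - (1 - p))"
    using assms(2,3) by (simp add: field_simps)
  then show ?thesis
    unfolding p_noisy_def by algebra
qed

locale noisy_labels = prob_space M
  for M :: "'w measure" +
  fixes X :: "'w \<Rightarrow> 'x::topological_space" and Y Yt :: "'w \<Rightarrow> int"
  assumes X_meas [measurable]: "X \<in> borel_measurable M"
    and Y_meas [measurable]: "Y \<in> measurable M (count_space UNIV)"
    and Yt_meas [measurable]: "Yt \<in> measurable M (count_space UNIV)"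
    and Y_range: "\<forall>\<omega>\<in>space M. Y \<omega> \<in> {-1, 1}"
    and Yt_range: "\<forall>\<omega>\<in>space M. Yt \<omega> \<in> {-1, 1}"
    and p_pos: "0 < pY M Y 1" and p_lt1: "pY M Y 1 < 1"
    and cond_indep: "\<forall>A\<in>sets borel. \<forall>y z.
        prob {\<omega> \<in> space M. X \<omega> \<in> A \<and> Y \<omega> = y \<and> Yt \<omega> = z} * pY M Y y
        = prob {\<omega> \<in> space M. X \<omega> \<in> A \<and> Y \<omega> = y} * prob {\<omega> \<in> space M. Y \<omega> = y \<and> Yt \<omega> = z}"
begin

abbreviation e_pos where "e_pos \<equiv> noise_rate M Y Yt 1"
abbreviation e_neg where "e_neg \<equiv> noise_rate M Y Yt (-1)"

lemma pY_neg_label: "pY M Y (-1) = 1 - pY M Y 1"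
  using prob_sign_neg[OF Y_meas Y_range] by (simp add: pY_def)

lemma pY_nonzero: "y \<in> {-1, 1} \<Longrightarrow> pY M Y y \<noteq> 0"
  using pY_neg_label p_pos p_lt1 by auto

lemma prob_label_flipped:
  "y \<in> {-1, 1} \<Longrightarrow> prob {\<omega>\<in>space M. Y \<omega> = y \<and> Yt \<omega> = -y} = noise_rate M Y Yt y * pY M Y y"
  using pY_nonzero by (simp add: noise_rate_def)

lemma prob_label_kept:
  assumes "y \<in> {-1, 1}"
  shows "prob {\<omega>\<in>space M. Y \<omega> = y \<and> Yt \<omega> = y} = (1 - noise_rate M Y Yt y) * pY M Y y"
proof -
  have "pY M Y y = prob {\<omega>\<in>space M. Y \<omega> = y \<and> Yt \<omega> = y} + prob {\<omega>\<in>space M. Y \<omega> = y \<and> Yt \<omega> = -y}"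
    using prob_split_sign[OF _ Yt_meas Yt_range, of "\<lambda>\<omega>. Y \<omega> = y"] assms
    by (auto simp: pY_def add.commute)
  then show ?thesis
    using prob_label_flipped[OF assms] by (simp add: algebra_simps)
qed

lemma pY_noisy_label: "pY M Yt 1 = pY M Y 1 * (1 - e_pos) + (1 - pY M Y 1) * e_neg"
proof -
  have "pY M Yt 1 = prob {\<omega>\<in>space M. Y \<omega> = 1 \<and> Yt \<omega> = 1} + prob {\<omega>\<in>space M. Y \<omega> = -1 \<and> Yt \<omega> = - (-1)}"
    using prob_split_sign[OF _ Y_meas Y_range, of "\<lambda>\<omega>. Yt \<omega> = 1"] by (simp add: pY_def conj_commute)
  also have "\<dots> = pY M Y 1 * (1 - e_pos) + pY M Y (-1) * e_neg"
    using prob_label_kept[of 1] prob_label_flipped[of "-1"] by (simp add: mult.commute)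
  finally show ?thesis
    by (simp only: pY_neg_label)
qed

lemma noisy_dist_measurable [measurable]:
  "(\<lambda>\<omega>. (X \<omega>, Yt \<omega>)) \<in> measurable M (borel \<Otimes>\<^sub>M count_space UNIV)"
  by measurable

lemma prob_space_noisy_dist: "prob_space (noisy_dist M X Yt)"
  unfolding noisy_dist_def by (rule prob_space_distr) measurable

lemma sets_noisy_dist: "sets (noisy_dist M X Yt) = sets (borel \<Otimes>\<^sub>M count_space UNIV)"
  by (simp add: noisy_dist_def)

lemma integral_noisy_dist:
  fixes g :: "'x \<times> int \<Rightarrow> real"
  assumes "g \<in> borel_measurable (borel \<Otimes>\<^sub>M count_space UNIV)"
  shows "integral\<^sup>L (noisy_dist M X Yt) g = (LINT \<omega>|M. g (X \<omega>, Yt \<omega>))"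
  unfolding noisy_dist_def by (rule integral_distr[OF noisy_dist_measurable assms])

context
  fixes f :: "'x \<Rightarrow> int"
  assumes f_meas: "f \<in> borel_measurable borel"
    and f_range: "\<forall>\<omega>\<in>space M. f (X \<omega>) \<in> {-1, 1}"
begin

lemma prediction_measurable [measurable]: "(\<lambda>\<omega>. f (X \<omega>)) \<in> measurable M (count_space UNIV)"
  by (rule borel_measurable_int_count_space[OF measurable_compose[OF X_meas f_meas]])

lemma prob_prediction_neg:
  "prob {\<omega>\<in>space M. f (X \<omega>) = -1 \<and> Y \<omega> = y} = pY M Y y - prob {\<omega>\<in>space M. f (X \<omega>) = 1 \<and> Y \<omega> = y}"
  using prob_split_sign[OF _ prediction_measurable f_range, of "\<lambda>\<omega>. Y \<omega> = y"]
  by (simp add: pY_def conj_commute)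

lemma prob_prediction_pos:
  "prob {\<omega>\<in>space M. f (X \<omega>) = 1}
    = prob {\<omega>\<in>space M. f (X \<omega>) = 1 \<and> Y \<omega> = 1} + prob {\<omega>\<in>space M. f (X \<omega>) = 1 \<and> Y \<omega> = -1}"
  by (rule prob_split_sign[OF _ Y_meas Y_range]) measurable

lemma risk_eq_errors:
  "risk M X Y f = prob {\<omega>\<in>space M. f (X \<omega>) = 1 \<and> Y \<omega> = -1} + prob {\<omega>\<in>space M. f (X \<omega>) = -1 \<and> Y \<omega> = 1}"
proof -
  have "risk M X Y f = prob {\<omega>\<in>space M. f (X \<omega>) \<noteq> Y \<omega> \<and> f (X \<omega>) = 1}
      + prob {\<omega>\<in>space M. f (X \<omega>) \<noteq> Y \<omega> \<and> f (X \<omega>) = -1}"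
    unfolding risk_def by (rule prob_split_sign[OF _ prediction_measurable f_range]) measurable
  also have "\<dots> = prob {\<omega>\<in>space M. f (X \<omega>) = 1 \<and> Y \<omega> = -1} + prob {\<omega>\<in>space M. f (X \<omega>) = -1 \<and> Y \<omega> = 1}"
    using Y_range by (intro arg_cong2[where f="(+)"] arg_cong[where f=prob]) auto
  finally show ?thesis .
qed

lemma prob_prediction_cond_indep:
  assumes "y \<in> {-1, 1}"
  shows "prob {\<omega>\<in>space M. f (X \<omega>) = a \<and> Y \<omega> = y \<and> Yt \<omega> = z}
    = prob {\<omega>\<in>space M. f (X \<omega>) = a \<and> Y \<omega> = y} * prob {\<omega>\<in>space M. Y \<omega> = y \<and> Yt \<omega> = z} / pY M Y y"
proof -
  have "f -` {a} \<in> sets borel"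
    using measurable_sets[OF borel_measurable_int_count_space[OF f_meas], of "{a}"] by simp
  from cond_indep[rule_format, OF this, of y z] show ?thesis
    using pY_nonzero[OF assms] by (simp add: field_simps)
qed

lemma prob_disagree_given_label:
  assumes y: "y \<in> {-1, 1}"
  shows "prob {\<omega>\<in>space M. f (X \<omega>) \<noteq> Yt \<omega> \<and> Y \<omega> = y}
    = prob {\<omega>\<in>space M. f (X \<omega>) = y \<and> Y \<omega> = y} * noise_rate M Y Yt y
      + prob {\<omega>\<in>space M. f (X \<omega>) = -y \<and> Y \<omega> = y} * (1 - noise_rate M Y Yt y)"
proof -
  have "{\<omega>\<in>space M. f (X \<omega>) \<noteq> Yt \<omega> \<and> Y \<omega> = y}
      = {\<omega>\<in>space M. f (X \<omega>) = y \<and> Y \<omega> = y \<and> Yt \<omega> = -y}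
        \<union> {\<omega>\<in>space M. f (X \<omega>) = -y \<and> Y \<omega> = y \<and> Yt \<omega> = y}"
    using y f_range Yt_range by (auto; force)
  then have "prob {\<omega>\<in>space M. f (X \<omega>) \<noteq> Yt \<omega> \<and> Y \<omega> = y}
      = prob {\<omega>\<in>space M. f (X \<omega>) = y \<and> Y \<omega> = y \<and> Yt \<omega> = -y}
        + prob {\<omega>\<in>space M. f (X \<omega>) = -y \<and> Y \<omega> = y \<and> Yt \<omega> = y}"
    using y by (auto intro!: finite_measure_Union)
  then show ?thesis
    using y pY_nonzero[OF y]
    by (simp add: prob_prediction_cond_indep prob_label_flipped prob_label_kept)
qed

lemma prob_disagree_noisy:
  "prob {\<omega>\<in>space M. f (X \<omega>) \<noteq> Yt \<omega>}
    = prob {\<omega>\<in>space M. f (X \<omega>) = 1 \<and> Y \<omega> = 1} * e_pos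
      + prob {\<omega>\<in>space M. f (X \<omega>) = -1 \<and> Y \<omega> = 1} * (1 - e_pos)
      + prob {\<omega>\<in>space M. f (X \<omega>) = -1 \<and> Y \<omega> = -1} * e_neg
      + prob {\<omega>\<in>space M. f (X \<omega>) = 1 \<and> Y \<omega> = -1} * (1 - e_neg)"
  using prob_split_sign[OF _ Y_meas Y_range, of "\<lambda>\<omega>. f (X \<omega>) \<noteq> Yt \<omega>"]
    prob_disagree_given_label[of 1] prob_disagree_given_label[of "-1"]
  by simp

lemma integral_noisy_disagree:
  "(LINT z|noisy_dist M X Yt. (if f (fst z) \<noteq> snd z then 1 else 0)) = prob {\<omega>\<in>space M. f (X \<omega>) \<noteq> Yt \<omega>}"
proof -
  note [measurable] = borel_measurable_int_count_space[OF f_meas]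
  show ?thesis
    by (simp add: integral_noisy_dist integral_if_eq_prob)
qed

lemma integral_peer_disagree:
  "(LINT zz|(noisy_dist M X Yt \<Otimes>\<^sub>M noisy_dist M X Yt). (if f (fst (fst zz)) \<noteq> snd (snd zz) then 1 else 0))
    = prob {\<omega>\<in>space M. f (X \<omega>) = 1} * prob {\<omega>\<in>space M. Yt \<omega> = -1}
      + prob {\<omega>\<in>space M. f (X \<omega>) = -1} * prob {\<omega>\<in>space M. Yt \<omega> = 1}"
proof -
  let ?N = "noisy_dist M X Yt"
  define h where "h c = prob {\<omega>\<in>space M. c \<noteq> Yt \<omega>}" for c :: int
  have h_sign: "h c = prob {\<omega>\<in>space M. Yt \<omega> = -c}" if c: "c \<in> {-1, 1}" for c
  proof -
    have "c \<noteq> Yt \<omega> \<longleftrightarrow> Yt \<omega> = -c" if "\<omega> \<in> space M" for \<omega>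
      using c Yt_range[rule_format, OF that] by (elim insertE) auto
    then show ?thesis
      unfolding h_def by (intro arg_cong[where f=prob] Collect_cong) auto
  qed
  note [measurable] = borel_measurable_int_count_space[OF f_meas]
  interpret N: pair_prob_space ?N ?N
    using prob_space_noisy_dist by (simp add: pair_prob_space_def pair_sigma_finite_def prob_space_imp_sigma_finite)
  have "integrable (?N \<Otimes>\<^sub>M ?N) (\<lambda>zz. if f (fst (fst zz)) \<noteq> snd (snd zz) then 1 else (0::real))"
    by (rule N.P.integrable_const_bound[where B=1])
      (auto simp: measurable_cong_sets[OF sets_pair_measure_cong[OF sets_noisy_dist sets_noisy_dist] refl])
  from N.integral_fst'[OF this, symmetric] have "(LINT zz|(?N \<Otimes>\<^sub>M ?N). (if f (fst (fst zz)) \<noteq> snd (snd zz) then 1 else 0))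
      = (LINT x|?N. (LINT y|?N. (if f (fst x) \<noteq> snd y then 1 else (0::real))))"
    by (simp only: fst_conv snd_conv)
  also have "\<dots> = (LINT x|?N. h (f (fst x)))"
  proof (rule Bochner_Integration.integral_cong[OF refl])
    fix x :: "'x \<times> int"
    show "(LINT y|?N. (if f (fst x) \<noteq> snd y then 1 else 0)) = h (f (fst x))"
    proof -
      have "(\<lambda>z. if f (fst x) \<noteq> snd z then 1 else 0 :: real) \<in> borel_measurable (borel \<Otimes>\<^sub>M count_space UNIV)"
        by measurable
      from integral_noisy_dist[OF this] show ?thesis
        by (simp add: h_def integral_if_eq_prob)
    qed
  qed
  also have "\<dots> = (LINT \<omega>|M. h (f (X \<omega>)))"
    by (rule integral_noisy_dist[where g="\<lambda>z. h (f (fst z))", simplified]) measurable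
  also have "\<dots> = prob {\<omega>\<in>space M. f (X \<omega>) = 1} * h 1 + prob {\<omega>\<in>space M. f (X \<omega>) = -1} * h (-1)"
    by (rule integral_comp_sign[OF prediction_measurable f_range])
  also have "\<dots> = prob {\<omega>\<in>space M. f (X \<omega>) = 1} * prob {\<omega>\<in>space M. Yt \<omega> = -1}
      + prob {\<omega>\<in>space M. f (X \<omega>) = -1} * prob {\<omega>\<in>space M. Yt \<omega> = 1}"
    using h_sign[of 1] h_sign[of "-1"] by simp
  finally show ?thesis .
qed

lemma peer_loss_eq_probs:
  "peer_loss M X Yt \<alpha> f = prob {\<omega>\<in>space M. f (X \<omega>) \<noteq> Yt \<omega>}
    - \<alpha> * (prob {\<omega>\<in>space M. f (X \<omega>) = 1} * prob {\<omega>\<in>space M. Yt \<omega> = -1}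
      + prob {\<omega>\<in>space M. f (X \<omega>) = -1} * prob {\<omega>\<in>space M. Yt \<omega> = 1})"
  unfolding peer_loss_def integral_noisy_disagree integral_peer_disagree ..

lemma peer_loss_affine_risk:
  assumes "delta M Yt \<noteq> 0" and "\<alpha> = 1 - (1 - e_neg - e_pos) * delta M Y / delta M Yt"
  shows "peer_loss M X Yt \<alpha> f = e_neg - \<alpha> * pY M Yt 1 + (1 - e_neg - e_pos) * risk M X Y f"
proof -
  have delta_Y: "delta M Y = pY M Y 1 - (1 - pY M Y 1)"
    by (simp add: delta_def pY_neg_label)
  have delta_Yt: "delta M Yt = pY M Yt 1 - (1 - pY M Yt 1)"
    using prob_sign_neg[OF Yt_meas Yt_range] by (simp add: delta_def pY_def)
  have "peer_loss M X Yt \<alpha> f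
      = prob {\<omega>\<in>space M. f (X \<omega>) \<noteq> Yt \<omega>}
        - \<alpha> * (prob {\<omega>\<in>space M. f (X \<omega>) = 1} * (1 - pY M Yt 1)
          + (1 - prob {\<omega>\<in>space M. f (X \<omega>) = 1}) * pY M Yt 1)"
    using prob_sign_neg[OF Yt_meas Yt_range] prob_sign_neg[OF prediction_measurable f_range]
    by (simp add: peer_loss_eq_probs pY_def)
  also have "\<dots> = e_neg - \<alpha> * pY M Yt 1 + (1 - e_neg - e_pos) * risk M X Y f"
    unfolding prob_disagree_noisy prob_prediction_pos risk_eq_errors prob_prediction_neg pY_noisy_label pY_neg_label
    by (rule peer_loss_risk_identity)
      (use assms delta_Y delta_Yt pY_noisy_label in simp_all)
  finally show ?thesis .
qed

end

end

theorem theorem4: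
  fixes M :: "'w measure" and X :: "'w \<Rightarrow> real ^ 'd"
    and Y Yt :: "'w \<Rightarrow> int" and F :: "(real ^ 'd \<Rightarrow> int) set"
    and \<X> :: "(real ^ 'd) set" and fstar :: "real ^ 'd \<Rightarrow> int" and \<alpha> :: real
  assumes M: "prob_space M"
    and X_meas: "X \<in> borel_measurable M"
    and X_in: "\<forall>\<omega>\<in>space M. X \<omega> \<in> \<X>"
    and Y_meas: "Y \<in> measurable M (count_space UNIV)"
    and Yt_meas: "Yt \<in> measurable M (count_space UNIV)"
    and Y_range: "\<forall>\<omega>\<in>space M. Y \<omega> \<in> {-1, 1}"
    and Yt_range: "\<forall>\<omega>\<in>space M. Yt \<omega> \<in> {-1, 1}"
    and p_pos: "0 < pY M Y 1" and p_lt1: "pY M Y 1 < 1"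
    and cond_indep: "\<forall>A\<in>sets borel. \<forall>y z.
        measure M {\<omega> \<in> space M. X \<omega> \<in> A \<and> Y \<omega> = y \<and> Yt \<omega> = z} * pY M Y y
        = measure M {\<omega> \<in> space M. X \<omega> \<in> A \<and> Y \<omega> = y}
          * measure M {\<omega> \<in> space M. Y \<omega> = y \<and> Yt \<omega> = z}"
    and noise: "noise_rate M Y Yt (-1) + noise_rate M Y Yt 1 < 1"
    and dpt: "delta M Yt \<noteq> 0"
    and alpha: "\<alpha> = 1 - (1 - noise_rate M Y Yt (-1) - noise_rate M Y Yt 1)
                          * delta M Y / delta M Yt"
    and F: "\<forall>f\<in>F. f \<in> borel_measurable borel \<and> (\<forall>x\<in>\<X>. f x \<in> {-1, 1})"
    and fstar_in: "fstar \<in> F"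
    and fstar_min: "\<forall>f\<in>F. peer_loss M X Yt \<alpha> fstar \<le> peer_loss M X Yt \<alpha> f"
  shows "fstar \<in> F \<and> (\<forall>f\<in>F. risk M X Y fstar \<le> risk M X Y f)"
proof -
  interpret noisy_labels M X Y Yt
    by (rule noisy_labels.intro[OF M]) (unfold_locales; fact)
  have "peer_loss M X Yt \<alpha> f = e_neg - \<alpha> * pY M Yt 1 + (1 - e_neg - e_pos) * risk M X Y f"
    if "f \<in> F" for f
    using F X_in that by (intro peer_loss_affine_risk dpt alpha) auto
  moreover have "0 < 1 - e_neg - e_pos"
    using noise by simp
  ultimately show ?thesis
    using fstar_in fstar_min by simp
qed

end
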